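(* Let $L$ be a powerful Lie ring of cardinality $p^{n}$. Then $L^{n+1}=0$.
   Context: A finite Lie ring $L$ of $p$-power order is powerful if $p>2$ and $L^{2}\le pL$, or $p=2$ and $L^{2}\le 4L$. The lower central series is $L^{1}=L$, $L^{k+1}=[L,L^{k}]$ (additive span of brackets). *)

theory Defs
  imports Main "HOL-Computational_Algebra.Primes"
begin

definition lie_ring :: "('a::ab_group_add \<Rightarrow> 'a \<Rightarrow> 'a) \<Rightarrow> bool" where
  "lie_ring br \<longleftrightarrow>
     (\<forall>x y z. br (x + y) z = br x z + br y z) \<and>
     (\<forall>x y z. br x (y + z) = br x y + br x z) \<and>
     (\<forall>x. br x x = 0) \<and>
     (\<forall>x y z. br x (br y z) + br y (br z x) + br z (br x y) = 0)"

inductive_set add_span :: "'a::ab_group_add set \<Rightarrow> 'a set" for S where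
  base: "x \<in> S \<Longrightarrow> x \<in> add_span S"
| zero: "0 \<in> add_span S"
| add: "x \<in> add_span S \<Longrightarrow> y \<in> add_span S \<Longrightarrow> x + y \<in> add_span S"
| neg: "x \<in> add_span S \<Longrightarrow> - x \<in> add_span S"

definition brk_set :: "('a::ab_group_add \<Rightarrow> 'a \<Rightarrow> 'a) \<Rightarrow> 'a set \<Rightarrow> 'a set \<Rightarrow> 'a set" where
  "brk_set br A B = add_span {br x y | x y. x \<in> A \<and> y \<in> B}"

text \<open>Lower central series, indexed as in the paper: lcs br k = L^k for k \<ge> 1
(L^1 = L, L^(k+1) = [L, L^k]); the value at 0 is set to L as a harmless convention.\<close>
fun lcs :: "('a::ab_group_add \<Rightarrow> 'a \<Rightarrow> 'a) \<Rightarrow> nat \<Rightarrow> 'a set" where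
  "lcs br 0 = UNIV"
| "lcs br (Suc 0) = UNIV"
| "lcs br (Suc (Suc k)) = brk_set br UNIV (lcs br (Suc k))"

definition ntimes :: "nat \<Rightarrow> 'a::ab_group_add \<Rightarrow> 'a" where
  "ntimes m x = (\<Sum>i<m. x)"

definition mult_set :: "nat \<Rightarrow> 'a::ab_group_add set" where
  "mult_set m = range (ntimes m)"

definition powerful :: "nat \<Rightarrow> ('a::ab_group_add \<Rightarrow> 'a \<Rightarrow> 'a) \<Rightarrow> bool" where
  "powerful p br \<longleftrightarrow>
     (p > 2 \<and> lcs br 2 \<subseteq> mult_set p) \<or> (p = 2 \<and> lcs br 2 \<subseteq> mult_set 4)"

end

theory Submission
  imports Defs
begin

text \<open>If [L,L] is contained in pL, then bilinearity gives
[L, p^k L] = p^k [L,L] \<subseteq> p^(k+1) L, so by induction L^(k+1) \<subseteq> p^k L.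
For |L| = p^n the multiple p^n L vanishes (Lagrange), hence L^(n+1) = 0.\<close>

lemma ntimes_0 [simp]: "ntimes 0 x = 0"
  by (simp add: ntimes_def)

lemma ntimes_Suc [simp]: "ntimes (Suc m) x = x + ntimes m x"
  by (simp add: ntimes_def add.commute)

lemma ntimes_zero_right [simp]: "ntimes m (0::'a::ab_group_add) = 0"
  by (induct m) simp_all

lemma ntimes_add_right: "ntimes m (x + y) = ntimes m x + ntimes m y"
  by (induct m) (simp_all add: algebra_simps)

lemma ntimes_minus_right: "ntimes m (- x) = - ntimes m x"
  by (induct m) (simp_all add: algebra_simps)

lemma ntimes_add_left: "ntimes (a + b) x = ntimes a x + ntimes b x"
  by (induct a) (simp_all add: algebra_simps)

lemma ntimes_mult: "ntimes (m * k) x = ntimes m (ntimes k x)"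
  by (induct m) (simp_all add: ntimes_add_left ntimes_add_right)

lemma sum_constant_ntimes: "finite A \<Longrightarrow> (\<Sum>y\<in>A. c) = ntimes (card A) c"
  by (induct A rule: finite_induct) simp_all

text \<open>Translating by x permutes the group, so the sum of all elements
equals itself plus |L| x.\<close>
lemma ntimes_card_UNIV:
  fixes x :: "'a::{finite,ab_group_add}"
  shows "ntimes (card (UNIV :: 'a set)) x = 0"
proof -
  have "(\<Sum>y\<in>(UNIV::'a set). y) = (\<Sum>y\<in>UNIV. y + x)"
    by (rule sum.reindex_bij_betw[symmetric])
       (auto simp: bij_betw_def inj_on_def intro!: range_eqI[of _ _ "_ - x"])
  also have "\<dots> = (\<Sum>y\<in>UNIV. y) + ntimes (card (UNIV :: 'a set)) x"
    by (simp add: sum.distrib sum_constant_ntimes)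
  finally show ?thesis by simp
qed

lemma mult_set_card_UNIV: "mult_set (card (UNIV :: 'a set)) = ({0} :: 'a::{finite,ab_group_add} set)"
  unfolding mult_set_def by (auto simp: ntimes_card_UNIV intro!: range_eqI[of _ _ 0])

lemma mult_set_Suc_0: "mult_set (Suc 0) = UNIV"
  unfolding mult_set_def by (auto intro!: range_eqI[of _ _ x for x])

lemma mult_set_mult_subset: "mult_set (m * k) \<subseteq> mult_set m"
  unfolding mult_set_def by (auto simp: ntimes_mult)

lemma add_span_subset_mult_set:
  assumes "S \<subseteq> mult_set m"
  shows "add_span S \<subseteq> mult_set m"
proof
  fix x assume "x \<in> add_span S"
  then show "x \<in> mult_set m"
  proof induct
    case (base x)
    then show ?case using assms by auto
  next
    case zero
    show ?case unfolding mult_set_def by (rule range_eqI[of _ _ 0]) simp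
  next
    case (add x y)
    then show ?case unfolding mult_set_def by (auto simp: ntimes_add_right[symmetric])
  next
    case (neg x)
    then show ?case unfolding mult_set_def by (auto simp: ntimes_minus_right[symmetric])
  qed
qed

lemma lie_ring_bracket_zero_right:
  assumes "lie_ring br"
  shows "br x 0 = 0"
proof -
  have "br x 0 = br x 0 + br x 0"
    using assms unfolding lie_ring_def by (metis add.right_neutral)
  then show ?thesis by simp
qed

lemma lie_ring_bracket_ntimes_right:
  assumes "lie_ring br"
  shows "br x (ntimes m y) = ntimes m (br x y)"
  using assms by (induct m) (simp_all add: lie_ring_bracket_zero_right lie_ring_def)

lemma bracket_in_lcs_2: "br x y \<in> lcs br 2"
  by (auto simp: numeral_2_eq_2 brk_set_def intro: add_span.base)

lemma zero_in_lcs: "0 \<in> lcs br k"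
  by (induct br k rule: lcs.induct) (simp_all add: brk_set_def add_span.zero)

lemma powerful_imp_lcs_2_subset:
  assumes "powerful p br"
  shows "lcs br 2 \<subseteq> mult_set p"
  using assms mult_set_mult_subset[of 2 2] unfolding powerful_def by auto

lemma lcs_Suc_subset_mult_set_power:
  assumes "lie_ring br" and derived: "lcs br 2 \<subseteq> mult_set m"
  shows "lcs br (Suc k) \<subseteq> mult_set (m ^ k)"
proof (induct k)
  case 0
  show ?case by (simp add: mult_set_Suc_0)
next
  case (Suc k)
  show ?case unfolding lcs.simps brk_set_def
  proof (rule add_span_subset_mult_set, clarify)
    fix x y assume "y \<in> lcs br (Suc k)"
    then obtain z where y: "y = ntimes (m ^ k) z"
      using Suc unfolding mult_set_def by auto
    obtain w where "br x z = ntimes m w"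
      using derived bracket_in_lcs_2[of br x z] unfolding mult_set_def by auto
    then have "br x y = ntimes (m ^ Suc k) w"
      using ntimes_mult[of "m ^ k" m w]
      by (simp add: y lie_ring_bracket_ntimes_right[OF assms(1)] mult.commute)
    then show "br x y \<in> mult_set (m ^ Suc k)"
      unfolding mult_set_def by auto
  qed
qed

theorem lemma2p3:
  fixes br :: "'a::{finite,ab_group_add} \<Rightarrow> 'a \<Rightarrow> 'a"
    and p n :: nat
  assumes "prime p"
    and "lie_ring br"
    and "card (UNIV :: 'a set) = p ^ n"
    and "powerful p br"
  shows "lcs br (n + 1) = {0}"
proof -
  have "lcs br (Suc n) \<subseteq> mult_set (p ^ n)"
    using lcs_Suc_subset_mult_set_power[OF assms(2) powerful_imp_lcs_2_subset[OF assms(4)]] .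
  also have "mult_set (p ^ n) = ({0} :: 'a set)"
    using mult_set_card_UNIV assms(3) by metis
  finally show ?thesis
    using zero_in_lcs[of br "n + 1"] by auto
qed

end
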